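(* Consider $p\ge 1$ machines, machine $v$ having nonnegative real parameters $k^A_v,k^B_v,t^A_v,t^B_v$, and a real bound $L$. For $1\le v\le p$ and an integer $a\ge 0$, let $b_v(a)=\{b\in\mathbb{Z}_{\ge 0} : f_v(a,b)\le L\}$ and $$dp(v,a)=\bigcup_{\substack{x_1+\dots+x_v=a\\ x_1,\dots,x_v\in\mathbb{Z}_{\ge 0}}}\big(b_1(x_1)+\dots+b_v(x_v)\big),$$ where $+$ denotes the sumset $X+Y=\{x+y : x\in X, y\in Y\}$. Then for every $1\le v\le p$ and every integer $a\ge 0$, the set $dp(v,a)$ is an interval of integers, i.e. if $c_1<c_2<c_3$ are integers with $c_1,c_3\in dp(v,a)$ then $c_2\in dp(v,a)$.
   Context: Each machine $v$ processes jobs of two types, A and B, in batches. A schedule of machine $v$ for the task-combination $(a,b)$ is a finite sequence of batches, each a nonempty group of jobs of a single type, with consecutive batches of different types, processing exactly $a$ A-jobs and $b$ B-jobs. An A-batch of $x$ jobs takes $t^A_v+k^A_v x^2$ time units and a B-batch of $x$ jobs takes $t^B_v+k^B_v x^2$ time units on machine $v$; the time of a schedule is the sum of its batch times (empty schedule: time $0$). $f_v(a,b)$ is the minimum time over all schedules of machine $v$ for $(a,b)$. Thus $dp(v,a)$ is the set of $b$ such that machines $1,\dots,v$ together can process $a$ A-jobs and $b$ B-jobs with each machine finishing within $L$ time units. *)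

theory Defs
  imports Complex_Main
begin

datatype jobtype = TA | TB

type_synonym batch = "jobtype \<times> nat"

definition is_schedule :: "nat \<Rightarrow> nat \<Rightarrow> batch list \<Rightarrow> bool" where
  "is_schedule a b s \<longleftrightarrow>
     (\<forall>bt \<in> set s. snd bt > 0) \<and>
     (\<forall>i. Suc i < length s \<longrightarrow> fst (s ! i) \<noteq> fst (s ! Suc i)) \<and>
     sum_list (map snd (filter (\<lambda>bt. fst bt = TA) s)) = a \<and>
     sum_list (map snd (filter (\<lambda>bt. fst bt = TB) s)) = b"

definition batch_time ::
  "(nat \<Rightarrow> real) \<Rightarrow> (nat \<Rightarrow> real) \<Rightarrow> (nat \<Rightarrow> real) \<Rightarrow> (nat \<Rightarrow> real) \<Rightarrow> nat \<Rightarrow> batch \<Rightarrow> real" where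
  "batch_time kA kB tA tB v bt =
     (case bt of (TA, x) \<Rightarrow> tA v + kA v * (real x)^2
               | (TB, x) \<Rightarrow> tB v + kB v * (real x)^2)"

definition sched_time ::
  "(nat \<Rightarrow> real) \<Rightarrow> (nat \<Rightarrow> real) \<Rightarrow> (nat \<Rightarrow> real) \<Rightarrow> (nat \<Rightarrow> real) \<Rightarrow> nat \<Rightarrow> batch list \<Rightarrow> real" where
  "sched_time kA kB tA tB v s = sum_list (map (batch_time kA kB tA tB v) s)"

definition fmin ::
  "(nat \<Rightarrow> real) \<Rightarrow> (nat \<Rightarrow> real) \<Rightarrow> (nat \<Rightarrow> real) \<Rightarrow> (nat \<Rightarrow> real) \<Rightarrow> nat \<Rightarrow> nat \<Rightarrow> nat \<Rightarrow> real" where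
  "fmin kA kB tA tB v a b = Min (sched_time kA kB tA tB v ` {s. is_schedule a b s})"

definition bset ::
  "(nat \<Rightarrow> real) \<Rightarrow> (nat \<Rightarrow> real) \<Rightarrow> (nat \<Rightarrow> real) \<Rightarrow> (nat \<Rightarrow> real) \<Rightarrow> real \<Rightarrow> nat \<Rightarrow> nat \<Rightarrow> nat set" where
  "bset kA kB tA tB L v a = {b. fmin kA kB tA tB v a b \<le> L}"

definition dp ::
  "(nat \<Rightarrow> real) \<Rightarrow> (nat \<Rightarrow> real) \<Rightarrow> (nat \<Rightarrow> real) \<Rightarrow> (nat \<Rightarrow> real) \<Rightarrow> real \<Rightarrow> nat \<Rightarrow> nat \<Rightarrow> nat set" where
  "dp kA kB tA tB L v a =
     (\<Union>x \<in> {x :: nat \<Rightarrow> nat. (\<Sum>i=1..v. x i) = a}.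
        {(\<Sum>i=1..v. y i) | y :: nat \<Rightarrow> nat. \<forall>i\<in>{1..v}. y i \<in> bset kA kB tA tB L i (x i)})"

end

(*
  Unfolding dp gives dp(v+1, a) = (UN x<=a. dp(v, a - x) + b_{v+1}(x)). If two families of sets of
  naturals consist of intervals and are linked below (the least element of D(a+1) lies in D(a)), then
  so is their convolution: consecutive terms D(a-x) + E(x) and D(a-x-1) + E(x+1) overlap, so the union
  is a chain of overlapping intervals. It remains to show both properties for a single machine.

  b_v is linked below: a schedule realising min b_v(a+1) cannot lose a B-job, so it begins with an
  A-batch, and one A-job can be dropped instead.

  b_v(a) is an interval: let b' < b both be feasible. Unless a B-job can be dropped from the schedule
  for b, it consists of b singleton B-batches between b+1 A-batches. Since x^2 >= (2q+1)x - q(q+1) on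
  the integers, a schedule with n A-batches takes at least T(n) for an affine function T, and the
  balanced schedule with b A-batches and b-1 singleton B-batches takes exactly T(b). The schedule for
  b' has at most b A-batches, so T(b) is at most the time of one of the two given schedules.
*)
theory Submission
  imports Defs "HOL-Library.Set_Algebras"
begin

section \<open>Order-convex sets and their convolution\<close>

definition order_convex :: "'a::order set \<Rightarrow> bool" where
  "order_convex S \<longleftrightarrow> (\<forall>x\<in>S. \<forall>z\<in>S. {x..z} \<subseteq> S)"

lemma order_convexD:
  "order_convex S \<Longrightarrow> x \<in> S \<Longrightarrow> z \<in> S \<Longrightarrow> x \<le> y \<Longrightarrow> y \<le> z \<Longrightarrow> y \<in> S"
  unfolding order_convex_def by fastforce

lemma order_convex_natI:
  fixes S :: "nat set"
  assumes step: "\<And>x z. x < z \<Longrightarrow> x \<in> S \<Longrightarrow> z \<in> S \<Longrightarrow> z - 1 \<in> S"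
  shows "order_convex S"
proof -
  have "{x..z} \<subseteq> S" if "x \<in> S" "z \<in> S" for x z
    using that(2)
  proof (induction z)
    case (Suc z)
    show ?case
    proof (cases "x \<le> z")
      case True
      then have "z \<in> S" using step[of x "Suc z"] \<open>x \<in> S\<close> Suc.prems by simp
      then show ?thesis using Suc by (auto simp: le_Suc_eq)
    qed (use Suc.prems in \<open>auto simp: not_le le_Suc_eq\<close>)
  qed (auto simp: subset_iff)
  then show ?thesis unfolding order_convex_def by blast
qed

lemma order_convex_set_plus:
  fixes A B :: "nat set"
  assumes "order_convex A" "order_convex B"
  shows "order_convex (A + B)"
  unfolding order_convex_def
proof (intro ballI subsetI)
  fix c1 c3 c assume "c1 \<in> A + B" "c3 \<in> A + B" "c \<in> {c1..c3}"
  then obtain a1 b1 a3 b3 where ab: "a1 \<in> A" "b1 \<in> B" "a3 \<in> A" "b3 \<in> B"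
    and c: "a1 + b1 \<le> c" "c \<le> a3 + b3"
    by (auto elim!: set_plus_elim)
  show "c \<in> A + B"
  proof (cases "c \<le> a1 + b3")
    case True
    then have "c - a1 \<in> B" using order_convexD[OF assms(2) ab(2,4)] c by simp
    then show ?thesis using ab(1) c by (metis le_add1 le_add_diff_inverse le_trans set_plus_intro)
  next
    case False
    then have "c - b3 \<in> A" using order_convexD[OF assms(1) ab(1,3)] c by simp
    then show ?thesis using ab(4) False by (metis le_add_diff_inverse2 nle_le le_add2 le_trans set_plus_intro)
  qed
qed

lemma order_convex_Un:
  fixes A B :: "'a::linorder set"
  assumes "order_convex A" "order_convex B" "z \<in> A" "z \<in> B"
  shows "order_convex (A \<union> B)"
  unfolding order_convex_def
proof (intro ballI subsetI)
  fix x y w assume xy: "x \<in> A \<union> B" "y \<in> A \<union> B" "w \<in> {x..y}"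
  show "w \<in> A \<union> B"
  proof (cases "w \<le> z")
    case True
    then show ?thesis using xy order_convexD[OF assms(1) _ assms(3)] order_convexD[OF assms(2) _ assms(4)] by auto
  next
    case False
    then show ?thesis using xy order_convexD[OF assms(1) assms(3)] order_convexD[OF assms(2) assms(4)] by auto
  qed
qed

lemma order_convex_UN_chain:
  fixes I :: "nat \<Rightarrow> 'a::linorder set"
  assumes "\<And>x. order_convex (I x)"
    and "\<And>x. lo \<le> x \<Longrightarrow> x < hi \<Longrightarrow> I x \<inter> I (Suc x) \<noteq> {}"
    and "lo \<le> hi"
  shows "order_convex (\<Union>x\<in>{lo..hi}. I x)"
  using assms(3,2)
proof (induction hi rule: dec_induct)
  case base then show ?case using assms(1) by simp
next
  case (step n)
  then obtain z where z: "z \<in> I n" "z \<in> I (Suc n)" by blast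
  have "(\<Union>x\<in>{lo..Suc n}. I x) = (\<Union>x\<in>{lo..n}. I x) \<union> I (Suc n)"
    using step.hyps(1) by (simp add: atLeastAtMostSuc_conv Un_commute)
  moreover have "z \<in> (\<Union>x\<in>{lo..n}. I x)" using z step.hyps(1) by auto
  ultimately show ?case using step z order_convex_Un[OF _ assms(1)] by auto
qed

lemma order_convex_int_image:
  assumes "order_convex S"
  shows "order_convex (int ` S)"
  unfolding order_convex_def
proof (intro ballI subsetI)
  fix x z c assume "x \<in> int ` S" "z \<in> int ` S" "c \<in> {x..z}"
  then obtain m n where "m \<in> S" "n \<in> S" "int m \<le> c" "c \<le> int n" by auto
  then have "m \<le> nat c" "nat c \<le> n" "c = int (nat c)" by auto
  then show "c \<in> int ` S" using order_convexD[OF assms \<open>m \<in> S\<close> \<open>n \<in> S\<close>] by blast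
qed

definition linked_below :: "(nat \<Rightarrow> nat set) \<Rightarrow> bool" where
  "linked_below D \<longleftrightarrow> (\<forall>a. \<forall>c\<in>D (Suc a). \<exists>c'\<le>c. c' \<in> D (Suc a) \<inter> D a)"

lemma linked_below_nonempty:
  assumes "linked_below D" "D j \<noteq> {}" "i \<le> j"
  shows "D i \<noteq> {}"
  using assms(3,2)
proof (induction rule: inc_induct)
  case (step n)
  then show ?case using assms(1) unfolding linked_below_def by blast
qed

definition set_convolution :: "(nat \<Rightarrow> nat set) \<Rightarrow> (nat \<Rightarrow> nat set) \<Rightarrow> nat \<Rightarrow> nat set" where
  "set_convolution D E a = (\<Union>x\<le>a. D (a - x) + E x)"

lemma set_convolutionI:
  "x \<le> a \<Longrightarrow> d \<in> D (a - x) \<Longrightarrow> e \<in> E x \<Longrightarrow> d + e \<in> set_convolution D E a"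
  unfolding set_convolution_def by auto

lemma set_convolution_terms_overlap:
  assumes "linked_below D" "linked_below E" "D (a - lo) \<noteq> {}" "E hi \<noteq> {}"
    and "lo \<le> x" "x < hi" "hi \<le> a"
  shows "(D (a - x) + E x) \<inter> (D (a - Suc x) + E (Suc x)) \<noteq> {}"
proof -
  have "E (Suc x) \<noteq> {}" using linked_below_nonempty[OF assms(2,4)] assms(6) by simp
  then obtain e where e: "e \<in> E (Suc x)" "e \<in> E x"
    using assms(2) unfolding linked_below_def by blast
  have a_x: "a - x = Suc (a - Suc x)" using assms(6,7) by simp
  have "D (a - x) \<noteq> {}" using linked_below_nonempty[OF assms(1,3)] assms(5) by simp
  then obtain d where d: "d \<in> D (a - x)" "d \<in> D (a - Suc x)"
    using assms(1) unfolding linked_below_def a_x by blast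
  have "d + e \<in> D (a - x) + E x" "d + e \<in> D (a - Suc x) + E (Suc x)"
    using d e by (auto intro: set_plus_intro)
  then show ?thesis by blast
qed

lemma order_convex_set_convolution:
  assumes "\<And>a. order_convex (D a)" "\<And>a. order_convex (E a)"
    and "linked_below D" "linked_below E"
  shows "order_convex (set_convolution D E a)"
  unfolding order_convex_def
proof (intro ballI subsetI)
  define I where "I x = D (a - x) + E x" for x
  fix c1 c3 c assume "c1 \<in> set_convolution D E a" "c3 \<in> set_convolution D E a" "c \<in> {c1..c3}"
  then obtain x1 x3 where x: "x1 \<le> a" "c1 \<in> I x1" "x3 \<le> a" "c3 \<in> I x3" and c: "c \<in> {c1..c3}"
    unfolding set_convolution_def I_def by blast
  define lo hi where "lo = min x1 x3" and "hi = max x1 x3"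
  have "lo \<le> hi" "hi \<le> a" and lohi: "x1 \<in> {lo..hi}" "x3 \<in> {lo..hi}"
    using x unfolding lo_def hi_def by auto
  have "I lo \<noteq> {}" "I hi \<noteq> {}" using x unfolding lo_def hi_def by (auto simp: min_def max_def)
  then have "D (a - lo) \<noteq> {}" "E hi \<noteq> {}" unfolding I_def by auto
  then have "I x \<inter> I (Suc x) \<noteq> {}" if "lo \<le> x" "x < hi" for x
    unfolding I_def using set_convolution_terms_overlap assms(3,4) that \<open>hi \<le> a\<close> by blast
  moreover have "order_convex (I x)" for x
    unfolding I_def by (intro order_convex_set_plus assms(1,2))
  ultimately have conv: "order_convex (\<Union>x\<in>{lo..hi}. I x)"
    using order_convex_UN_chain[OF _ _ \<open>lo \<le> hi\<close>] by blast
  have "c1 \<in> (\<Union>x\<in>{lo..hi}. I x)" "c3 \<in> (\<Union>x\<in>{lo..hi}. I x)"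
    using x lohi by blast+
  then have "c \<in> (\<Union>x\<in>{lo..hi}. I x)"
    by (rule order_convexD[OF conv]) (use c in auto)
  then obtain y where "y \<in> {lo..hi}" "c \<in> I y" by blast
  moreover from this(1) have "y \<le> a" using \<open>hi \<le> a\<close> by simp
  ultimately show "c \<in> set_convolution D E a" unfolding set_convolution_def I_def by blast
qed

lemma linked_below_set_convolution:
  assumes "linked_below D" "linked_below E"
  shows "linked_below (set_convolution D E)"
  unfolding linked_below_def
proof (intro allI ballI)
  fix a c assume "c \<in> set_convolution D E (Suc a)"
  then obtain x d e where x: "x \<le> Suc a" "c = d + e" "d \<in> D (Suc a - x)" "e \<in> E x"
    unfolding set_convolution_def by (auto elim!: set_plus_elim)
  show "\<exists>c'\<le>c. c' \<in> set_convolution D E (Suc a) \<inter> set_convolution D E a"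
  proof (cases x)
    case 0
    then obtain d' where "d' \<le> d" "d' \<in> D (Suc a)" "d' \<in> D a"
      using assms(1) x unfolding linked_below_def by auto
    moreover have "d' + e \<in> set_convolution D E (Suc a)" "d' + e \<in> set_convolution D E a"
      using set_convolutionI[of 0] x 0 \<open>d' \<in> D (Suc a)\<close> \<open>d' \<in> D a\<close> by simp_all
    ultimately show ?thesis using x by (intro exI[of _ "d' + e"]) simp
  next
    case (Suc y)
    then obtain e' where "e' \<le> e" "e' \<in> E x" "e' \<in> E y"
      using assms(2) x unfolding linked_below_def by auto
    moreover have "Suc a - x = a - y" "y \<le> a" using Suc x by auto
    ultimately have "d + e' \<in> set_convolution D E (Suc a)" "d + e' \<in> set_convolution D E a"
      using set_convolutionI x by metis+
    then show ?thesis using x \<open>e' \<le> e\<close> by (intro exI[of _ "d + e'"]) simp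
  qed
qed

section \<open>Schedules\<close>

definition batch_sizes :: "jobtype \<Rightarrow> batch list \<Rightarrow> nat list" where
  "batch_sizes \<tau> s = map snd (filter (\<lambda>bt. fst bt = \<tau>) s)"

lemma batch_sizes_Nil [simp]: "batch_sizes \<tau> [] = []"
  and batch_sizes_Cons [simp]:
    "batch_sizes \<tau> (bt # s) = (if fst bt = \<tau> then snd bt # batch_sizes \<tau> s else batch_sizes \<tau> s)"
  and batch_sizes_append [simp]: "batch_sizes \<tau> (s @ s') = batch_sizes \<tau> s @ batch_sizes \<tau> s'"
  by (simp_all add: batch_sizes_def)

lemma batch_sizes_pos: "\<forall>bt\<in>set s. 0 < snd bt \<Longrightarrow> \<forall>x\<in>set (batch_sizes \<tau> s). 0 < x"
  by (auto simp: batch_sizes_def)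

lemma sum_list_snd_eq: "sum_list (map snd s) = sum_list (batch_sizes TA s) + sum_list (batch_sizes TB s)"
proof (induction s)
  case (Cons bt s)
  then show ?case by (cases "fst bt") auto
qed simp

lemma is_schedule_iff:
  "is_schedule a b s \<longleftrightarrow> (\<forall>bt\<in>set s. 0 < snd bt) \<and> distinct_adj (map fst s) \<and>
     sum_list (batch_sizes TA s) = a \<and> sum_list (batch_sizes TB s) = b"
  unfolding is_schedule_def batch_sizes_def distinct_adj_conv_nth by simp

lemma length_le_sum_list: "\<forall>x\<in>set xs. 0 < x \<Longrightarrow> length xs \<le> sum_list (xs :: nat list)"
  by (induction xs) auto

lemma finite_schedules: "finite {s. is_schedule a b s}"
proof (rule finite_subset)
  show "{s. is_schedule a b s} \<subseteq> {s. set s \<subseteq> UNIV \<times> {..a + b} \<and> length s \<le> a + b}"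
  proof clarify
    fix s assume "is_schedule a b s"
    then have pos: "\<forall>bt\<in>set s. 0 < snd bt" and sum: "sum_list (map snd s) = a + b"
      by (auto simp: is_schedule_iff sum_list_snd_eq)
    show "set s \<subseteq> UNIV \<times> {..a + b} \<and> length s \<le> a + b"
      using member_le_sum_list[of _ "map snd s"] length_le_sum_list[of "map snd s"] pos sum
      by fastforce
  qed
  have "(UNIV :: jobtype set) \<subseteq> {TA, TB}" using jobtype.exhaust by blast
  then have "finite (UNIV :: jobtype set)" by (rule finite_subset) simp
  then show "finite {s. set s \<subseteq> (UNIV :: jobtype set) \<times> {..a + b} \<and> length s \<le> a + b}"
    by (intro finite_lists_length_le finite_cartesian_product) simp_all
qed

lemma schedule_exists: "is_schedule a b ((if a = 0 then [] else [(TA, a)]) @ (if b = 0 then [] else [(TB, b)]))"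
  unfolding is_schedule_iff by auto

lemma mem_bset_iff:
  "b \<in> bset kA kB tA tB L v a \<longleftrightarrow> (\<exists>s. is_schedule a b s \<and> sched_time kA kB tA tB v s \<le> L)"
proof -
  have "finite (sched_time kA kB tA tB v ` {s. is_schedule a b s})"
    using finite_schedules by simp
  moreover have "sched_time kA kB tA tB v ` {s. is_schedule a b s} \<noteq> {}"
    using schedule_exists by blast
  ultimately show ?thesis unfolding bset_def fmin_def by (auto simp: Min_le_iff)
qed

lemma batch_count_difference:
  assumes "distinct_adj (map fst s)" "s \<noteq> []"
  shows "int (length (batch_sizes TA s)) - int (length (batch_sizes TB s)) =
    of_bool (fst (hd s) = TA) + of_bool (fst (last s) = TA) - 1"
  using assms
proof (induction s)
  case (Cons bt s)
  show ?case
  proof (cases "s = []")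
    case True
    then show ?thesis by (cases "fst bt") auto
  next
    case False
    then have "distinct_adj (map fst s)" "fst bt \<noteq> fst (hd s)"
      using Cons.prems by (auto simp: distinct_adj_Cons hd_map)
    then show ?thesis using Cons.IH False by (cases "fst bt"; cases "fst (hd s)") auto
  qed
qed simp

lemma length_batch_sizes_TA_le:
  "distinct_adj (map fst s) \<Longrightarrow> length (batch_sizes TA s) \<le> length (batch_sizes TB s) + 1"
  using batch_count_difference[of s] by (cases "s = []") (auto simp: of_bool_def split: if_splits)

text \<open>One \<open>\<tau>\<close>-job can be dropped from \<open>s\<close> keeping batches nonempty and alternating: shrink a
  \<open>\<tau>\<close>-batch of size at least 2, or delete a \<open>\<tau>\<close>-batch at either end.\<close>

definition removable :: "jobtype \<Rightarrow> batch list \<Rightarrow> bool" where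
  "removable \<tau> s \<longleftrightarrow>
     (\<exists>bt\<in>set s. fst bt = \<tau> \<and> 2 \<le> snd bt) \<or> (s \<noteq> [] \<and> (fst (hd s) = \<tau> \<or> fst (last s) = \<tau>))"

lemma sum_list_ones: "\<forall>x\<in>set xs. x = 1 \<Longrightarrow> sum_list xs = length (xs :: nat list)"
  by (induction xs) auto

lemma jobtype_neq_TB: "\<tau> \<noteq> TB \<longleftrightarrow> \<tau> = TA"
  by (cases \<tau>) auto

lemma unremovable_TB_count:
  assumes "is_schedule a b s" "\<not> removable TB s" "0 < b"
  shows "length (batch_sizes TA s) = b + 1"
proof -
  have pos: "\<forall>bt\<in>set s. 0 < snd bt" and alt: "distinct_adj (map fst s)"
    and b: "sum_list (batch_sizes TB s) = b"
    using assms(1) by (auto simp: is_schedule_iff)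
  have "snd bt = 1" if "bt \<in> set s" "fst bt = TB" for bt
    using that pos assms(2) unfolding removable_def by fastforce
  then have "\<forall>x\<in>set (batch_sizes TB s). x = 1" by (auto simp: batch_sizes_def)
  then have "length (batch_sizes TB s) = b" using b by (simp add: sum_list_ones)
  moreover have "s \<noteq> []" using b \<open>0 < b\<close> by auto
  moreover have "fst (hd s) = TA" "fst (last s) = TA"
    using assms(2) \<open>s \<noteq> []\<close> jobtype_neq_TB unfolding removable_def by blast+
  ultimately show ?thesis using batch_count_difference[OF alt] by simp
qed

fun interleave :: "nat list \<Rightarrow> batch list" where
  "interleave [] = []"
| "interleave (x # xs) = (TA, x) # (if xs = [] then [] else (TB, 1) # interleave xs)"

lemma batch_sizes_interleave:
  "batch_sizes TA (interleave ps) = ps" "batch_sizes TB (interleave ps) = replicate (length ps - 1) 1"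
  by (induction ps) (auto simp: neq_Nil_conv)

lemma is_schedule_interleave:
  assumes "\<forall>x\<in>set ps. 0 < x"
  shows "is_schedule (sum_list ps) (length ps - 1) (interleave ps)"
proof -
  have "distinct_adj (map fst (interleave ps))"
  proof (induction ps)
    case (Cons x xs)
    then show ?case by (cases xs) (auto simp: distinct_adj_Cons)
  qed simp
  moreover have "\<forall>bt\<in>set (interleave ps). 0 < snd bt"
    using assms by (induction ps) auto
  ultimately show ?thesis
    by (simp add: is_schedule_iff batch_sizes_interleave sum_list_replicate)
qed

lemma square_ge_secant: "(2 * real q + 1) * real x - real q * (real q + 1) \<le> real x ^ 2"
proof -
  have "0 \<le> (real x - real q) * (real x - real q - 1)"
    by (cases "x \<le> q") (auto intro: mult_nonpos_nonpos mult_nonneg_nonneg)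
  then show ?thesis by (simp add: algebra_simps power2_eq_square)
qed

lemma sum_squares_ge:
  "(2 * real q + 1) * real (sum_list xs) - real (length xs) * (real q * (real q + 1))
     \<le> (\<Sum>x\<leftarrow>xs. real x ^ 2)"
proof (induction xs)
  case (Cons x xs)
  then show ?case using square_ge_secant[of q x] by (simp add: algebra_simps)
qed simp

lemma sum_squares_ge_length: "\<forall>x\<in>set xs. 0 < x \<Longrightarrow> real (length xs) \<le> (\<Sum>x\<leftarrow>xs. real x ^ 2)"
  by (induction xs) (auto intro: add_mono simp: one_le_power)

lemma balanced_parts:
  assumes "0 < y" "y \<le> a"
  obtains ps where "length ps = y" "sum_list ps = a" "\<forall>x\<in>set ps. 0 < x"
    "(\<Sum>x\<leftarrow>ps. real x ^ 2)
      = (2 * real (a div y) + 1) * real a - real y * (real (a div y) * (real (a div y) + 1))"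
proof
  define q r where "q = a div y" and "r = a mod y"
  have a: "a = y * q + r" and "r < y" and "1 \<le> q"
    using assms div_le_mono[of y a y] unfolding q_def r_def by auto
  define ps where "ps = replicate r (Suc q) @ replicate (y - r) q"
  show "length ps = y" "sum_list ps = a" "\<forall>x\<in>set ps. 0 < x"
    using \<open>r < y\<close> \<open>1 \<le> q\<close> a by (auto simp: ps_def sum_list_replicate algebra_simps)
  have "(\<Sum>x\<leftarrow>ps. real x ^ 2) = real r * (real q + 1) ^ 2 + (real y - real r) * real q ^ 2"
    using \<open>r < y\<close> by (simp add: ps_def sum_list_replicate of_nat_diff)
  also have "\<dots> = (2 * real q + 1) * real a - real y * (real q * (real q + 1))"
    unfolding a by (simp add: algebra_simps power2_eq_square)
  finally show "(\<Sum>x\<leftarrow>ps. real x ^ 2)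
      = (2 * real (a div y) + 1) * real a - real y * (real (a div y) * (real (a div y) + 1))"
    unfolding q_def .
qed

section \<open>A single machine\<close>

locale machine =
  fixes kA kB tA tB :: "nat \<Rightarrow> real" and L :: real and v :: nat
  assumes nonneg: "0 \<le> kA v" "0 \<le> kB v" "0 \<le> tA v" "0 \<le> tB v"
begin

abbreviation time :: "batch list \<Rightarrow> real" where
  "time \<equiv> sched_time kA kB tA tB v"

abbreviation B :: "nat \<Rightarrow> nat set" where
  "B \<equiv> bset kA kB tA tB L v"

lemma batch_time_nonneg: "0 \<le> batch_time kA kB tA tB v bt"
  using nonneg by (cases bt; cases "fst bt") (auto simp: batch_time_def)

lemma batch_time_mono: "x \<le> y \<Longrightarrow> batch_time kA kB tA tB v (\<tau>, x) \<le> batch_time kA kB tA tB v (\<tau>, y)"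
  using nonneg by (cases \<tau>) (auto simp: batch_time_def intro!: mult_left_mono power_mono)

lemma remove_job:
  assumes pos: "\<forall>bt\<in>set s. 0 < snd bt" and alt: "distinct_adj (map fst s)" and "removable \<tau> s"
  obtains s' where "\<forall>bt\<in>set s'. 0 < snd bt" "distinct_adj (map fst s')"
    "sum_list (batch_sizes \<tau> s') + 1 = sum_list (batch_sizes \<tau> s)"
    "\<And>\<sigma>. \<sigma> \<noteq> \<tau> \<Longrightarrow> batch_sizes \<sigma> s' = batch_sizes \<sigma> s" "time s' \<le> time s"
proof (cases "\<exists>bt\<in>set s. fst bt = \<tau> \<and> 2 \<le> snd bt")
  case True
  then obtain xs x ys where s: "s = xs @ (\<tau>, x) # ys" and "2 \<le> x"
    by (metis prod.collapse split_list)
  show ?thesis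
  proof (rule that[of "xs @ (\<tau>, x - 1) # ys"])
    show "time (xs @ (\<tau>, x - 1) # ys) \<le> time s"
      using batch_time_mono[of "x - 1" x \<tau>] by (simp add: s sched_time_def)
  qed (use pos alt \<open>2 \<le> x\<close> in \<open>auto simp: s\<close>)
next
  case False
  then have one: "snd bt = 1" if "bt \<in> set s" "fst bt = \<tau>" for bt
    using pos that by fastforce
  from \<open>removable \<tau> s\<close> False have "s \<noteq> []" "fst (hd s) = \<tau> \<or> fst (last s) = \<tau>"
    unfolding removable_def by blast+
  then consider bt s0 where "s = bt # s0" "fst bt = \<tau>" | bt s0 where "s = s0 @ [bt]" "fst bt = \<tau>"
    by (metis list.collapse append_butlast_last_id)
  then show ?thesis
  proof cases
    case 1
    show ?thesis
      by (rule that[of s0])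
        (use 1 one pos alt batch_time_nonneg in \<open>auto simp: sched_time_def distinct_adj_Cons\<close>)
  next
    case 2
    show ?thesis
      by (rule that[of s0])
        (use 2 one pos alt batch_time_nonneg in \<open>auto simp: sched_time_def\<close>)
  qed
qed

lemma B_remove_TA:
  assumes "is_schedule a b s" "removable TA s" "time s \<le> L"
  shows "0 < a \<and> b \<in> B (a - 1)"
proof -
  have pos: "\<forall>bt\<in>set s. 0 < snd bt" and alt: "distinct_adj (map fst s)"
    and "sum_list (batch_sizes TA s) = a" "sum_list (batch_sizes TB s) = b"
    using assms(1) by (auto simp: is_schedule_iff)
  moreover obtain s' where "\<forall>bt\<in>set s'. 0 < snd bt" "distinct_adj (map fst s')"
    "sum_list (batch_sizes TA s') + 1 = sum_list (batch_sizes TA s)"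
    "batch_sizes TB s' = batch_sizes TB s" "time s' \<le> time s"
    using remove_job[OF pos alt assms(2)] by (metis jobtype.distinct(2))
  ultimately show ?thesis using assms(3) by (auto simp: mem_bset_iff is_schedule_iff)
qed

lemma B_remove_TB:
  assumes "is_schedule a b s" "removable TB s" "time s \<le> L"
  shows "0 < b \<and> b - 1 \<in> B a"
proof -
  have pos: "\<forall>bt\<in>set s. 0 < snd bt" and alt: "distinct_adj (map fst s)"
    and "sum_list (batch_sizes TA s) = a" "sum_list (batch_sizes TB s) = b"
    using assms(1) by (auto simp: is_schedule_iff)
  moreover obtain s' where "\<forall>bt\<in>set s'. 0 < snd bt" "distinct_adj (map fst s')"
    "sum_list (batch_sizes TB s') + 1 = sum_list (batch_sizes TB s)"
    "batch_sizes TA s' = batch_sizes TA s" "time s' \<le> time s"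
    using remove_job[OF pos alt assms(2)] by (metis jobtype.distinct(1))
  ultimately show ?thesis using assms(3) by (auto simp: mem_bset_iff is_schedule_iff)
qed

lemma linked_below_B: "linked_below B"
  unfolding linked_below_def
proof (intro allI ballI)
  fix a c assume "c \<in> B (Suc a)"
  define c0 where "c0 = (LEAST c. c \<in> B (Suc a))"
  have c0: "c0 \<in> B (Suc a)" "c0 \<le> c"
    using \<open>c \<in> B (Suc a)\<close> unfolding c0_def by (auto intro: LeastI Least_le)
  then obtain s where s: "is_schedule (Suc a) c0 s" "time s \<le> L"
    by (auto simp: mem_bset_iff)
  have "\<not> removable TB s"
  proof
    assume "removable TB s"
    then have "c0 - 1 \<in> B (Suc a)" "c0 - 1 < c0" using B_remove_TB[OF s(1) _ s(2)] by auto
    then show False unfolding c0_def using not_less_Least by blast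
  qed
  moreover have "s \<noteq> []" using s(1) by (auto simp: is_schedule_iff)
  ultimately have "removable TA s"
    unfolding removable_def using jobtype_neq_TB by blast
  then have "c0 \<in> B a" using B_remove_TA[OF s(1) _ s(2)] by simp
  then show "\<exists>c'\<le>c. c' \<in> B (Suc a) \<inter> B a" using c0 by blast
qed

lemma sched_time_eq:
  "time s = real (length (batch_sizes TA s)) * tA v + kA v * (\<Sum>x\<leftarrow>batch_sizes TA s. real x ^ 2)
    + (real (length (batch_sizes TB s)) * tB v + kB v * (\<Sum>x\<leftarrow>batch_sizes TB s. real x ^ 2))"
  by (induction s) (auto simp: sched_time_def batch_time_def algebra_simps split: jobtype.splits)

text \<open>For every \<open>q\<close>, a lower bound for the time of a schedule with \<open>a\<close> A-jobs in \<open>n\<close>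
  A-batches, attained by the balanced schedule when \<open>q = a div n\<close>; it is affine in \<open>n\<close>.\<close>

definition time_bound :: "nat \<Rightarrow> nat \<Rightarrow> real \<Rightarrow> real" where
  "time_bound a q n = n * tA v + kA v * ((2 * real q + 1) * real a - n * (real q * (real q + 1)))
    + (n - 1) * (tB v + kB v)"

lemma time_bound_le_time:
  assumes "is_schedule a b s"
  shows "time_bound a q (length (batch_sizes TA s)) \<le> time s"
proof -
  let ?A = "batch_sizes TA s" and ?B = "batch_sizes TB s"
  have pos: "\<forall>x\<in>set ?B. 0 < x" and "distinct_adj (map fst s)" and "sum_list ?A = a"
    using assms by (auto simp: is_schedule_iff batch_sizes_pos)
  have "kA v * ((2 * real q + 1) * real a - length ?A * (real q * (real q + 1)))
      \<le> kA v * (\<Sum>x\<leftarrow>?A. real x ^ 2)"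
    using sum_squares_ge[of q ?A] \<open>sum_list ?A = a\<close> nonneg(1) by (intro mult_left_mono) auto
  moreover have "real (length ?A) - 1 \<le> real (length ?B)"
    using length_batch_sizes_TA_le[OF \<open>distinct_adj (map fst s)\<close>] by simp
  then have "(real (length ?A) - 1) * (tB v + kB v) \<le> real (length ?B) * (tB v + kB v)"
    using nonneg by (intro mult_right_mono) auto
  moreover have "kB v * real (length ?B) \<le> kB v * (\<Sum>x\<leftarrow>?B. real x ^ 2)"
    using sum_squares_ge_length[OF pos] nonneg(2) by (rule mult_left_mono)
  ultimately show ?thesis unfolding time_bound_def sched_time_eq by (simp add: algebra_simps)
qed

lemma time_bound_attained:
  assumes "0 < y" "y \<le> a"
  obtains r where "is_schedule a (y - 1) r" "time r = time_bound a (a div y) y"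
proof -
  obtain ps where ps: "length ps = y" "sum_list ps = a" "\<forall>x\<in>set ps. 0 < x"
    "(\<Sum>x\<leftarrow>ps. real x ^ 2)
      = (2 * real (a div y) + 1) * real a - real y * (real (a div y) * (real (a div y) + 1))"
    using balanced_parts[OF assms] by blast
  show ?thesis
  proof (rule that[of "interleave ps"])
    show "is_schedule a (y - 1) (interleave ps)" using is_schedule_interleave[OF ps(3)] ps by simp
    have "time (interleave ps) = real y * tA v + kA v * (\<Sum>x\<leftarrow>ps. real x ^ 2)
        + (real (y - 1) * tB v + kB v * real (y - 1))"
      by (simp add: sched_time_eq batch_sizes_interleave sum_list_replicate ps(1))
    then show "time (interleave ps) = time_bound a (a div y) y"
      unfolding time_bound_def ps(4) using assms by (simp add: of_nat_diff algebra_simps)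
  qed
qed

lemma time_bound_le_max:
  assumes "m \<le> n"
  shows "time_bound a q n \<le> max (time_bound a q m) (time_bound a q (n + 1))"
proof -
  define c where "c = tA v + tB v + kB v - kA v * (real q * (real q + 1))"
  have affine: "time_bound a q x = time_bound a q 0 + x * c" for x
    unfolding time_bound_def c_def by (simp add: algebra_simps)
  show ?thesis
  proof (cases "0 \<le> c")
    case True
    then have "n * c \<le> (n + 1) * c" by (simp add: algebra_simps)
    then show ?thesis using affine[of n] affine[of "n + 1"] by (simp add: le_max_iff_disj)
  next
    case False
    then have "n * c \<le> m * c" using assms by (simp add: mult_right_mono_neg)
    then show ?thesis using affine[of n] affine[of m] by (simp add: le_max_iff_disj)
  qed
qed

lemma B_step_down:
  assumes "y1 < y" "y1 \<in> B a" "y \<in> B a"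
  shows "y - 1 \<in> B a"
proof -
  obtain s where s: "is_schedule a y s" "time s \<le> L" using assms(3) by (auto simp: mem_bset_iff)
  show ?thesis
  proof (cases "removable TB s")
    case True
    then show ?thesis using B_remove_TB[OF s(1) _ s(2)] by blast
  next
    case False
    then have nA: "length (batch_sizes TA s) = y + 1"
      using unremovable_TB_count[OF s(1)] assms(1) by simp
    moreover have "length (batch_sizes TA s) \<le> a"
      using s(1) length_le_sum_list[of "batch_sizes TA s"] by (auto simp: is_schedule_iff batch_sizes_pos)
    ultimately have "0 < y" "y \<le> a" using assms(1) by auto
    obtain s1 where s1: "is_schedule a y1 s1" "time s1 \<le> L" using assms(2) by (auto simp: mem_bset_iff)
    have "length (batch_sizes TB s1) \<le> y1"
      using s1(1) length_le_sum_list[of "batch_sizes TB s1"] by (auto simp: is_schedule_iff batch_sizes_pos)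
    then have m: "length (batch_sizes TA s1) \<le> y"
      using s1(1) length_batch_sizes_TA_le[of s1] assms(1) by (auto simp: is_schedule_iff)
    obtain r where r: "is_schedule a (y - 1) r" "time r = time_bound a (a div y) y"
      using time_bound_attained[OF \<open>0 < y\<close> \<open>y \<le> a\<close>] by blast
    have "time r \<le> max (time_bound a (a div y) (length (batch_sizes TA s1))) (time_bound a (a div y) (y + 1))"
      using r(2) time_bound_le_max[of "length (batch_sizes TA s1)" y a "a div y"] m by (simp add: add.commute)
    also have "\<dots> \<le> max (time s1) (time s)"
      using time_bound_le_time[OF s1(1)] time_bound_le_time[OF s(1)] nA
      by (intro max.mono) (simp_all add: add.commute)
    also have "\<dots> \<le> L" using s1(2) s(2) by simp
    finally show ?thesis using r(1) by (auto simp: mem_bset_iff)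
  qed
qed

lemma order_convex_B: "order_convex (B a)"
  by (rule order_convex_natI) (rule B_step_down)

end

section \<open>The sets dp\<close>

lemma dp_0: "dp kA kB tA tB L 0 a = (if a = 0 then {0} else {})"
  unfolding dp_def by auto

lemma dp_Suc:
  "dp kA kB tA tB L (Suc v) = set_convolution (dp kA kB tA tB L v) (bset kA kB tA tB L (Suc v))"
proof (intro ext set_eqI iffI)
  fix a c assume "c \<in> dp kA kB tA tB L (Suc v) a"
  then obtain x y where xy: "(\<Sum>i=1..Suc v. x i) = a" "c = (\<Sum>i=1..Suc v. y i)"
      "\<forall>i\<in>{1..Suc v}. y i \<in> bset kA kB tA tB L i (x i)"
    unfolding dp_def by blast
  have "(\<Sum>i=1..v. y i) \<in> dp kA kB tA tB L v (a - x (Suc v))"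
    unfolding dp_def using xy(1,3) by force
  moreover have "y (Suc v) \<in> bset kA kB tA tB L (Suc v) (x (Suc v))" "x (Suc v) \<le> a"
    using xy(1,3) by auto
  ultimately show "c \<in> set_convolution (dp kA kB tA tB L v) (bset kA kB tA tB L (Suc v)) a"
    unfolding set_convolution_def using xy(2) by force
next
  fix a c assume "c \<in> set_convolution (dp kA kB tA tB L v) (bset kA kB tA tB L (Suc v)) a"
  then obtain z d e where c: "z \<le> a" "c = d + e" "d \<in> dp kA kB tA tB L v (a - z)"
      "e \<in> bset kA kB tA tB L (Suc v) z"
    unfolding set_convolution_def by (auto elim!: set_plus_elim)
  then obtain x y where xy: "(\<Sum>i=1..v. x i) = a - z" "d = (\<Sum>i=1..v. y i)"
      "\<forall>i\<in>{1..v}. y i \<in> bset kA kB tA tB L i (x i)"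
    unfolding dp_def by blast
  have "(\<Sum>i=1..v. (x(Suc v := z)) i) = (\<Sum>i=1..v. x i)" "(\<Sum>i=1..v. (y(Suc v := e)) i) = (\<Sum>i=1..v. y i)"
    by (auto intro: sum.cong)
  then have "(\<Sum>i=1..Suc v. (x(Suc v := z)) i) = a" "c = (\<Sum>i=1..Suc v. (y(Suc v := e)) i)"
      "\<forall>i\<in>{1..Suc v}. (y(Suc v := e)) i \<in> bset kA kB tA tB L i ((x(Suc v := z)) i)"
    using xy c by (auto simp: le_Suc_eq)
  then show "c \<in> dp kA kB tA tB L (Suc v) a" unfolding dp_def by blast
qed

lemma dp_order_convex_linked_below:
  assumes "\<And>w. 1 \<le> w \<Longrightarrow> w \<le> v \<Longrightarrow> machine kA kB tA tB w"
  shows "(\<forall>a. order_convex (dp kA kB tA tB L v a)) \<and> linked_below (dp kA kB tA tB L v)"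
  using assms
proof (induction v)
  case 0
  show ?case by (simp add: dp_0 order_convex_def linked_below_def)
next
  case (Suc v)
  then have IH: "\<And>a. order_convex (dp kA kB tA tB L v a)" "linked_below (dp kA kB tA tB L v)"
    by simp_all
  have "machine kA kB tA tB (Suc v)" using Suc.prems by simp
  then have "\<And>a. order_convex (bset kA kB tA tB L (Suc v) a)" "linked_below (bset kA kB tA tB L (Suc v))"
    by (simp_all add: machine.order_convex_B machine.linked_below_B)
  with IH show ?case
    unfolding dp_Suc by (simp add: order_convex_set_convolution linked_below_set_convolution)
qed

theorem theorem3:
  fixes p :: nat and kA kB tA tB :: "nat \<Rightarrow> real" and L :: real
  assumes "p \<ge> 1"
    and "\<forall>v\<in>{1..p}. kA v \<ge> 0 \<and> kB v \<ge> 0 \<and> tA v \<ge> 0 \<and> tB v \<ge> 0"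
  shows "\<forall>v\<in>{1..p}. \<forall>a :: nat. \<forall>c1 c2 c3 :: int.
           c1 < c2 \<and> c2 < c3 \<and> c1 \<in> int ` dp kA kB tA tB L v a \<and> c3 \<in> int ` dp kA kB tA tB L v a
           \<longrightarrow> c2 \<in> int ` dp kA kB tA tB L v a"
proof (intro ballI allI impI)
  fix v a and c1 c2 c3 :: int
  assume v: "v \<in> {1..p}"
    and c: "c1 < c2 \<and> c2 < c3 \<and> c1 \<in> int ` dp kA kB tA tB L v a \<and> c3 \<in> int ` dp kA kB tA tB L v a"
  have "machine kA kB tA tB w" if "1 \<le> w" "w \<le> v" for w
    using assms(2) v that by (auto simp: machine_def)
  then have "order_convex (dp kA kB tA tB L v a)"
    using dp_order_convex_linked_below by blast
  then show "c2 \<in> int ` dp kA kB tA tB L v a"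
    using c order_convexD[OF order_convex_int_image, of _ c1 c3 c2] by simp
qed

end
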